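(* Let $\Omega_S$ be the infinite square lattice graph, i.e. the graph with vertex set $\mathbb{Z}^2$ in which $(a,b)$ and $(c,d)$ are adjacent iff $|a-c|+|b-d|=1$. Then $\chi_{td}(\Omega_S) = 8$.
   Context: For a (possibly infinite) simple graph $G$ and a positive integer $k$, a proper $k$-total difference labeling of $G$ is a function $f: V(G)\to\{1,\dots,k\}$, extended to edges by $f(\{u,v\}) = |f(u)-f(v)|$, such that: (i) adjacent vertices receive different labels; (ii) two distinct edges sharing a vertex receive different labels; (iii) no edge receives the same label as either of its endpoints. $\chi_{td}(G)$ denotes the smallest $k$ for which $G$ has a proper $k$-total difference labeling. *)

theory Defs
  imports Main
begin

text \<open>A (possibly infinite) simple graph is given by a symmetric, irreflexive
adjacency relation E on the vertex type. Labels are integers in {1..k};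
the label of edge {u,v} is |f u - f v|.\<close>

definition proper_td_labeling :: "('a \<Rightarrow> 'a \<Rightarrow> bool) \<Rightarrow> nat \<Rightarrow> ('a \<Rightarrow> int) \<Rightarrow> bool" where
  "proper_td_labeling E k f \<longleftrightarrow>
     (\<forall>v. f v \<in> {1..int k}) \<and>
     (\<forall>u v. E u v \<longrightarrow> f u \<noteq> f v) \<and>
     (\<forall>u v w. E u v \<and> E u w \<and> v \<noteq> w \<longrightarrow> \<bar>f u - f v\<bar> \<noteq> \<bar>f u - f w\<bar>) \<and>
     (\<forall>u v. E u v \<longrightarrow> \<bar>f u - f v\<bar> \<noteq> f u \<and> \<bar>f u - f v\<bar> \<noteq> f v)"

definition chi_td :: "('a \<Rightarrow> 'a \<Rightarrow> bool) \<Rightarrow> nat" where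
  "chi_td E = (LEAST k. k > 0 \<and> (\<exists>f. proper_td_labeling E k f))"

definition square_lattice :: "int \<times> int \<Rightarrow> int \<times> int \<Rightarrow> bool" where
  "square_lattice p q \<longleftrightarrow> \<bar>fst p - fst q\<bar> + \<bar>snd p - snd q\<bar> = 1"

end

theory Submission
  imports Defs "HOL-Library.Numeral_Type"
begin

text \<open>Lower bound: the four edges at a vertex labelled x need four distinct labels |x - y|, where
y ranges over the labels x may be adjacent to.

Upper bound: the map (a, b) \<mapsto> a + 2b mod 6 sends the four neighbours of a lattice point
to the four residues at distance 1 or 2, i.e. it is a locally injective homomorphism onto the
octahedron K_{2,2,2} on \<int>/6\<int>, whose antipodal pairs are {x, x + 3}. Labelling the octahedron
by 1, 3, 7, 2, 6, 8 is proper, and properness pulls back along such maps.\<close>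

lemma chi_td_eqI:
  assumes "k > 0" and "proper_td_labeling E k f"
    and "\<And>k' g. proper_td_labeling E k' g \<Longrightarrow> k \<le> k'"
  shows "chi_td E = k"
  unfolding chi_td_def using assms by (intro Least_equality) auto

definition compatible_labels :: "int \<Rightarrow> int \<Rightarrow> bool" where
  "compatible_labels x y \<longleftrightarrow> x \<noteq> y \<and> \<bar>x - y\<bar> \<noteq> x \<and> \<bar>x - y\<bar> \<noteq> y"

definition available_edge_labels :: "int \<Rightarrow> int set \<Rightarrow> int set" where
  "available_edge_labels x M = (\<lambda>y. \<bar>x - y\<bar>) ` (M \<inter> {y. compatible_labels x y})"

lemmas available_edge_labels_simps =
  available_edge_labels_def compatible_labels_def Int_insert_left card_insert_if

lemma proper_td_labeling_range:
  "proper_td_labeling E k f \<Longrightarrow> f v \<in> {1..int k}"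
  unfolding proper_td_labeling_def by blast

lemma proper_td_labeling_compatible:
  assumes "proper_td_labeling E k f" and "E u v"
  shows "compatible_labels (f u) (f v)"
  using assms unfolding proper_td_labeling_def compatible_labels_def by blast

lemma proper_td_labeling_inj_on_neighbours:
  assumes "proper_td_labeling E k f"
  shows "inj_on (\<lambda>v. \<bar>f u - f v\<bar>) {v. E u v}"
  using assms unfolding proper_td_labeling_def inj_on_def by blast

lemma card_neighbours_le_available_edge_labels:
  assumes P: "proper_td_labeling E k f" and "range f \<subseteq> M" and "finite M"
    and "N \<subseteq> {v. E u v}"
  shows "card N \<le> card (available_edge_labels (f u) M)"
proof (rule card_inj_on_le)
  show "inj_on (\<lambda>v. \<bar>f u - f v\<bar>) N"
    using proper_td_labeling_inj_on_neighbours[OF P] \<open>N \<subseteq> {v. E u v}\<close> by (rule inj_on_subset)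
  show "(\<lambda>v. \<bar>f u - f v\<bar>) ` N \<subseteq> available_edge_labels (f u) M"
    using assms proper_td_labeling_compatible[OF P] unfolding available_edge_labels_def by blast
  show "finite (available_edge_labels (f u) M)"
    using \<open>finite M\<close> unfolding available_edge_labels_def by simp
qed

lemma proper_td_labeling_prune:
  assumes P: "proper_td_labeling E k f" and "range f \<subseteq> M" and "finite M"
    and "\<And>u. d \<le> card {v. E u v}"
    and "\<forall>x\<in>X. card (available_edge_labels x M) < d"
  shows "range f \<subseteq> M - X"
proof -
  have "f u \<notin> X" for u
  proof
    assume "f u \<in> X"
    have "d \<le> card {v. E u v}"
      by (fact assms(4))
    also have "\<dots> \<le> card (available_edge_labels (f u) M)"
      by (rule card_neighbours_le_available_edge_labels[OF P \<open>range f \<subseteq> M\<close> \<open>finite M\<close> order_refl])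
    finally have "d \<le> card (available_edge_labels (f u) M)" .
    with \<open>f u \<in> X\<close> assms(5) show False
      by (meson not_le)
  qed
  then show ?thesis
    using \<open>range f \<subseteq> M\<close> by auto
qed

lemma square_lattice_iff:
  "square_lattice (a, b) q \<longleftrightarrow> q \<in> {(a + 1, b), (a - 1, b), (a, b + 1), (a, b - 1)}"
  by (cases q) (auto simp: square_lattice_def abs_if)

lemma card_square_lattice_neighbours: "card {q. square_lattice p q} = 4"
proof (cases p)
  case (Pair a b)
  then have "{q. square_lattice p q} = {(a + 1, b), (a - 1, b), (a, b + 1), (a, b - 1)}"
    by (auto simp: square_lattice_iff)
  then show ?thesis
    by (simp add: card_insert_if)
qed

lemma square_lattice_labeling_ge_8:
  assumes P: "proper_td_labeling square_lattice k f"
  shows "8 \<le> k"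
proof (rule ccontr)
  note prune = proper_td_labeling_prune[OF P, where d = 4]
  assume "\<not> 8 \<le> k"
  then have "range f \<subseteq> {1..7}"
    using proper_td_labeling_range[OF P] by fastforce
  also have "\<dots> = {1, 2, 3, 4, 5, 6, 7}"
    by auto
  finally have "range f \<subseteq> {1, 2, 3, 4, 5, 6, 7} - {3, 4}"
    by (rule prune) (simp_all add: available_edge_labels_simps card_square_lattice_neighbours)
  also have "\<dots> = {1, 2, 5, 6, 7}"
    by auto
  finally have "range f \<subseteq> {1, 2, 5, 6, 7} - {2}"
    by (rule prune) (simp_all add: available_edge_labels_simps card_square_lattice_neighbours)
  also have "\<dots> = {1, 5, 6, 7}"
    by auto
  finally have "range f \<subseteq> {1, 5, 6, 7} - {5, 6}"
    by (rule prune) (simp_all add: available_edge_labels_simps card_square_lattice_neighbours)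
  also have "\<dots> = {1, 7}"
    by auto
  finally have "range f \<subseteq> {1, 7} - {1, 7}"
    by (rule prune) (simp_all add: available_edge_labels_simps card_square_lattice_neighbours)
  then show False
    by simp
qed

lemma proper_td_labeling_pullback:
  assumes "proper_td_labeling E' k f"
    and "\<And>u v. E u v \<Longrightarrow> E' (h u) (h v)"
    and "\<And>u v w. E u v \<Longrightarrow> E u w \<Longrightarrow> v \<noteq> w \<Longrightarrow> h v \<noteq> h w"
  shows "proper_td_labeling E k (f \<circ> h)"
  using assms unfolding proper_td_labeling_def by simp metis

lemma forall_6: "(\<forall>x::6. P x) \<longleftrightarrow> P 0 \<and> P 1 \<and> P 2 \<and> P 3 \<and> P 4 \<and> P 5"
proof -
  have "x \<in> {0, 1, 2, 3, 4, 5}" for x :: 6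
  proof (cases x)
    case (of_int z)
    then have "z \<in> {0, 1, 2, 3, 4, 5}"
      by auto
    then show ?thesis
      using of_int by auto
  qed
  then show ?thesis
    by (metis empty_iff insert_iff)
qed

definition octahedron :: "6 \<Rightarrow> 6 \<Rightarrow> bool" where
  "octahedron x y \<longleftrightarrow> y \<noteq> x \<and> y \<noteq> x + 3"

definition octahedron_label :: "6 \<Rightarrow> int" where
  "octahedron_label x =
    (if x = 0 then 1 else if x = 1 then 3 else if x = 2 then 7
     else if x = 3 then 2 else if x = 4 then 6 else 8)"

lemma proper_td_labeling_octahedron: "proper_td_labeling octahedron 8 octahedron_label"
  unfolding proper_td_labeling_def octahedron_def by (simp add: forall_6 octahedron_label_def)

definition lattice_residue :: "int \<times> int \<Rightarrow> 6" where
  "lattice_residue p = of_int (fst p + 2 * snd p)"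

lemma octahedron_lattice_residue:
  "square_lattice p q \<Longrightarrow> octahedron (lattice_residue p) (lattice_residue q)"
  by (cases p) (auto simp: square_lattice_iff octahedron_def lattice_residue_def algebra_simps)

lemma lattice_residue_distinct_neighbours:
  "square_lattice p v \<Longrightarrow> square_lattice p w \<Longrightarrow> v \<noteq> w \<Longrightarrow> lattice_residue v \<noteq> lattice_residue w"
  by (cases p) (auto simp: square_lattice_iff lattice_residue_def algebra_simps)

theorem mainTheorem2:
  shows "chi_td square_lattice = 8"
proof (rule chi_td_eqI)
  show "proper_td_labeling square_lattice 8 (octahedron_label \<circ> lattice_residue)"
    using proper_td_labeling_octahedron octahedron_lattice_residue lattice_residue_distinct_neighbours
    by (rule proper_td_labeling_pullback)
  show "8 \<le> k" if "proper_td_labeling square_lattice k g" for k g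
    using that by (rule square_lattice_labeling_ge_8)
qed simp

end
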